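(* Let $\alpha\in(1,\infty)$, let $p_X$ be a distribution on a finite set $\mathcal X$ and $p_{Y\mid X}$ a channel to a finite set $\mathcal Y$. Let $\tilde q^{(0)}_{Y\mid X}$ be an initial channel and for $k\ge0$ define $$r^{(k)}_{X\mid Y}(x\mid y)=\frac{p_X(x)\tilde q^{(k)}_{Y\mid X}(y\mid x)}{\sum_{x'}p_X(x')\tilde q^{(k)}_{Y\mid X}(y\mid x')},\qquad \tilde q^{(k+1)}_{Y\mid X}(y\mid x)=\frac{p_{Y\mid X}(y\mid x)r^{(k)}_{X\mid Y}(x\mid y)^{1-1/\alpha}}{\sum_{y'}p_{Y\mid X}(y'\mid x)r^{(k)}_{X\mid Y}(x\mid y')^{1-1/\alpha}}.$$ Then $\lim_{k\to\infty}\tilde F_\alpha^{\mathrm C}(\tilde q^{(k+1)}_{Y\mid X},r^{(k)}_{X\mid Y})=I_\alpha^{\mathrm C}(X;Y)$.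
   Context: $\log$ is natural, $D$ is the Kullback–Leibler divergence, and $D_\alpha(p\|q):=\frac{1}{\alpha-1}\log\sum_zp(z)^\alpha q(z)^{1-\alpha}$. The Augustin–Csiszár mutual information is $I_\alpha^{\mathrm C}(X;Y):=\min_{q_Y}\sum_xp_X(x)D_\alpha(p_{Y\mid X}(\cdot\mid x)\|q_Y)$. For a channel $\tilde q_{Y\mid X}$ and a reverse channel $r_{X\mid Y}$, $\tilde F_\alpha^{\mathrm C}(\tilde q_{Y\mid X},r_{X\mid Y}):=\frac{\alpha}{1-\alpha}D(p_X\tilde q_{Y\mid X}\|p_Xp_{Y\mid X})+\mathbb E^{p_X\tilde q_{Y\mid X}}[\log\frac{r_{X\mid Y}(X\mid Y)}{p_X(X)}]$. *)

theory Defs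
  imports "HOL-Analysis.Analysis" "HOL-Library.Extended_Real"
begin

definition is_dist :: "('a::finite \<Rightarrow> real) \<Rightarrow> bool" where
  "is_dist p \<longleftrightarrow> (\<forall>z. p z \<ge> 0) \<and> (\<Sum>z\<in>UNIV. p z) = 1"

(* a channel W, with W x y = p_{Y|X}(y|x) *)
definition is_channel :: "('x::finite \<Rightarrow> 'y::finite \<Rightarrow> real) \<Rightarrow> bool" where
  "is_channel W \<longleftrightarrow> (\<forall>x. is_dist (W x))"

definition renyi_div :: "real \<Rightarrow> ('a::finite \<Rightarrow> real) \<Rightarrow> ('a \<Rightarrow> real) \<Rightarrow> ereal" where
  "renyi_div \<alpha> p q =
     (if \<exists>z. p z > 0 \<and> q z = 0 then \<infinity>
      else ereal (1 / (\<alpha> - 1) * ln (\<Sum>z\<in>UNIV. p z powr \<alpha> * q z powr (1 - \<alpha>))))"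

definition kl_div :: "('a::finite \<Rightarrow> real) \<Rightarrow> ('a \<Rightarrow> real) \<Rightarrow> ereal" where
  "kl_div p q =
     (if \<exists>z. p z > 0 \<and> q z = 0 then \<infinity>
      else ereal (\<Sum>z\<in>UNIV. if p z = 0 then 0 else p z * ln (p z / q z)))"

definition augustin_csiszar_MI :: "real \<Rightarrow> ('x::finite \<Rightarrow> real) \<Rightarrow> ('x \<Rightarrow> 'y::finite \<Rightarrow> real) \<Rightarrow> ereal" where
  "augustin_csiszar_MI \<alpha> pX W =
     (INF qY\<in>{qY. is_dist qY}. (\<Sum>x\<in>UNIV. ereal (pX x) * renyi_div \<alpha> (W x) qY))"

definition exp_log_ratio :: "('x::finite \<Rightarrow> real) \<Rightarrow> ('x \<Rightarrow> 'y::finite \<Rightarrow> real) \<Rightarrow> ('x \<Rightarrow> 'y \<Rightarrow> real) \<Rightarrow> ereal" where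
  "exp_log_ratio pX q r =
     (if \<exists>x y. pX x * q x y > 0 \<and> r x y = 0 then -\<infinity>
      else ereal (\<Sum>x\<in>UNIV. \<Sum>y\<in>UNIV.
              if pX x * q x y = 0 then 0 else pX x * q x y * ln (r x y / pX x)))"

(* F~_alpha^C(q~, r), where r x y = r_{X|Y}(x|y) and q x y = q~_{Y|X}(y|x) *)
definition F_C :: "real \<Rightarrow> ('x::finite \<Rightarrow> real) \<Rightarrow> ('x \<Rightarrow> 'y::finite \<Rightarrow> real)
                    \<Rightarrow> ('x \<Rightarrow> 'y \<Rightarrow> real) \<Rightarrow> ('x \<Rightarrow> 'y \<Rightarrow> real) \<Rightarrow> ereal" where
  "F_C \<alpha> pX W q r =
     ereal (\<alpha> / (1 - \<alpha>)) * kl_div (\<lambda>(x,y). pX x * q x y) (\<lambda>(x,y). pX x * W x y)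
     + exp_log_ratio pX q r"

definition rev_channel :: "('x::finite \<Rightarrow> real) \<Rightarrow> ('x \<Rightarrow> 'y::finite \<Rightarrow> real) \<Rightarrow> ('x \<Rightarrow> 'y \<Rightarrow> real)" where
  "rev_channel pX q = (\<lambda>x y. pX x * q x y / (\<Sum>x'\<in>UNIV. pX x' * q x' y))"

definition channel_update :: "real \<Rightarrow> ('x::finite \<Rightarrow> 'y::finite \<Rightarrow> real) \<Rightarrow> ('x \<Rightarrow> 'y \<Rightarrow> real) \<Rightarrow> ('x \<Rightarrow> 'y \<Rightarrow> real)" where
  "channel_update \<alpha> W r = (\<lambda>x y. W x y * r x y powr (1 - 1/\<alpha>)
        / (\<Sum>y'\<in>UNIV. W x y' * r x y' powr (1 - 1/\<alpha>)))"

end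

theory Submission
  imports Defs
begin

text \<open>
  For a channel \<open>q\<close> let \<open>r\<^sub>q = rev_channel pX q\<close>, \<open>T q = channel_update \<alpha> W r\<^sub>q\<close> and
  \<open>Z\<^sub>q(x) = \<Sum>\<^sub>y W(y|x) r\<^sub>q(x|y)\<^bsup>1-1/\<alpha>\<^esup>\<close>. The value of \<open>F_C\<close> at \<open>(T q, r\<^sub>q)\<close> collapses to
  \<open>f(q) = \<Sum>\<^sub>x pX(x) (\<alpha>/(\<alpha>-1) ln Z\<^sub>q(x) - ln pX(x))\<close>. Hoelder's inequality bounds \<open>f(q)\<close> by
  \<open>\<Sum>\<^sub>x pX(x) D\<^sub>\<alpha>(W(.|x) || Q)\<close> for every output distribution \<open>Q\<close>, with equality when \<open>q\<close> is a
  fixed point \<open>q*\<close> of \<open>T\<close> and \<open>Q\<close> is its output distribution \<open>Q*\<close>; hence \<open>f(q*)\<close> is the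
  Augustin--Csiszar mutual information. A fixed point exists by Brouwer's theorem: for small
  \<open>\<delta> > 0\<close>, \<open>T\<close> maps the compact convex set of channels that are at least \<open>\<delta>\<close> on the support of
  \<open>pX W\<close> into itself.

  Convergence comes from the potential \<open>\<Phi>(q) = \<Sum>\<^sub>x\<^sub>y pX(x) q*(y|x) ln q(y|x)\<close>: one step
  increases it by \<open>(1/\<alpha>) D(q*||q|pX) + (1-1/\<alpha>) D(Q*||Q\<^sub>q) + (1-1/\<alpha>) (f(q*) - f(q))\<close>, all
  three terms being nonnegative, while \<open>\<Phi> \<le> \<Phi>(q*)\<close> by Gibbs' inequality. So the gaps
  \<open>f(q*) - f(q\<^sub>k)\<close> are summable and tend to \<open>0\<close>.
\<close>

lemma mult_ln_ratio_le:
  fixes a b :: real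
  assumes "0 < a" and "0 < b"
  shows "a * (ln b - ln a) \<le> b - a"
proof -
  have "ln (b / a) \<le> b / a - 1" using assms by (intro ln_le_minus_one) simp
  then have "a * ln (b / a) \<le> a * (b / a - 1)" using assms by (intro mult_left_mono) auto
  then show ?thesis using assms by (simp add: ln_div right_diff_distrib)
qed

lemma gibbs_inequality:
  fixes a b :: "'a \<Rightarrow> real"
  assumes "finite A" and "\<And>i. i \<in> A \<Longrightarrow> 0 \<le> a i" and "\<And>i. i \<in> A \<Longrightarrow> 0 \<le> b i"
    and "sum b A \<le> sum a A" and "\<And>i. i \<in> A \<Longrightarrow> 0 < a i \<Longrightarrow> 0 < b i"
  shows "0 \<le> (\<Sum>i\<in>A. a i * (ln (a i) - ln (b i)))"
proof -
  have "a i * (ln (b i) - ln (a i)) \<le> b i - a i" if "i \<in> A" for i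
    using assms(2,3,5)[OF that] mult_ln_ratio_le[of "a i" "b i"] by (cases "a i = 0") auto
  then have "(\<Sum>i\<in>A. a i * (ln (b i) - ln (a i))) \<le> (\<Sum>i\<in>A. b i - a i)"
    by (rule sum_mono)
  also have "\<dots> \<le> 0" using assms(4) by (simp add: sum_subtractf)
  finally show ?thesis by (simp add: sum_subtractf right_diff_distrib)
qed

lemma young_inequality_normalised:
  fixes a b sa sb :: real
  assumes "0 < \<theta>" and "\<theta> < 1" and "0 \<le> a" and "0 \<le> b" and "0 < sa" and "0 < sb"
  shows "a powr \<theta> * b powr (1 - \<theta>)
           \<le> sa powr \<theta> * sb powr (1 - \<theta>) * (\<theta> * (a / sa) + (1 - \<theta>) * (b / sb))"
proof (cases "a = 0 \<or> b = 0")
  case True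
  then show ?thesis using assms by auto
next
  case False
  with assms have "0 < a" "0 < b" by auto
  have "(a / sa) powr \<theta> * (b / sb) powr (1 - \<theta>) \<le> \<theta> * (a / sa) + (1 - \<theta>) * (b / sb)"
    using assms \<open>0 < a\<close> \<open>0 < b\<close> by (intro Youngs_inequality_0) auto
  then have "sa powr \<theta> * sb powr (1 - \<theta>) * ((a / sa) powr \<theta> * (b / sb) powr (1 - \<theta>))
               \<le> sa powr \<theta> * sb powr (1 - \<theta>) * (\<theta> * (a / sa) + (1 - \<theta>) * (b / sb))"
    by (intro mult_left_mono) auto
  then show ?thesis using assms \<open>0 < a\<close> \<open>0 < b\<close> by (simp add: powr_divide)
qed

lemma holder_inequality_sum:
  fixes a b :: "'a \<Rightarrow> real"
  assumes "finite A" and "0 < \<theta>" and "\<theta> < 1"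
    and a_nonneg: "\<And>i. i \<in> A \<Longrightarrow> 0 \<le> a i" and b_nonneg: "\<And>i. i \<in> A \<Longrightarrow> 0 \<le> b i"
  shows "(\<Sum>i\<in>A. a i powr \<theta> * b i powr (1 - \<theta>))
           \<le> (\<Sum>i\<in>A. a i) powr \<theta> * (\<Sum>i\<in>A. b i) powr (1 - \<theta>)"
proof -
  define sa sb where "sa = (\<Sum>i\<in>A. a i)" and "sb = (\<Sum>i\<in>A. b i)"
  have "0 \<le> sa" "0 \<le> sb" unfolding sa_def sb_def using a_nonneg b_nonneg by (auto intro: sum_nonneg)
  show ?thesis
  proof (cases "sa = 0 \<or> sb = 0")
    case True
    then have "(\<forall>i\<in>A. a i = 0) \<or> (\<forall>i\<in>A. b i = 0)"
      unfolding sa_def sb_def using assms(1) a_nonneg b_nonneg by (auto simp: sum_nonneg_eq_0_iff)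
    then show ?thesis by auto
  next
    case False
    with \<open>0 \<le> sa\<close> \<open>0 \<le> sb\<close> have "0 < sa" "0 < sb" by auto
    define M where "M = sa powr \<theta> * sb powr (1 - \<theta>)"
    have "(\<Sum>i\<in>A. a i powr \<theta> * b i powr (1 - \<theta>))
            \<le> (\<Sum>i\<in>A. M * (\<theta> * (a i / sa) + (1 - \<theta>) * (b i / sb)))"
      unfolding M_def using assms(2,3) a_nonneg b_nonneg \<open>0 < sa\<close> \<open>0 < sb\<close>
      by (intro sum_mono young_inequality_normalised) auto
    also have "\<dots> = M * (\<theta> * (sa / sa) + (1 - \<theta>) * (sb / sb))"
      unfolding sa_def sb_def
      by (simp add: sum.distrib flip: sum_distrib_left sum_divide_distrib)
    also have "\<dots> = M" using \<open>0 < sa\<close> \<open>0 < sb\<close> by simp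
    finally show ?thesis unfolding M_def sa_def sb_def .
  qed
qed

lemma bounded_increments_tendsto_zero:
  fixes a \<Phi> :: "nat \<Rightarrow> real"
  assumes "\<And>k. 0 \<le> a k" and "\<And>k. a k \<le> \<Phi> (Suc k) - \<Phi> k" and "\<And>k. \<Phi> k \<le> M"
  shows "a \<longlonglongrightarrow> 0"
proof -
  have "(\<Sum>k<n. a k) \<le> M - \<Phi> 0" for n
  proof -
    have "(\<Sum>k<n. a k) \<le> (\<Sum>k<n. \<Phi> (Suc k) - \<Phi> k)" by (intro sum_mono assms(2))
    also have "\<dots> = \<Phi> n - \<Phi> 0" by (rule sum_lessThan_telescope)
    finally show ?thesis using assms(3)[of n] by linarith
  qed
  with assms(1) have "summable a" by (intro summableI_nonneg_bounded)
  then show ?thesis by (rule summable_LIMSEQ_zero)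
qed

locale augustin_channel =
  fixes \<alpha> :: real and pX :: "'x::finite \<Rightarrow> real" and W :: "'x \<Rightarrow> 'y::finite \<Rightarrow> real"
  assumes alpha_gt_1: "\<alpha> > 1" and dist_pX: "is_dist pX" and channel_W: "is_channel W"
begin

abbreviation "\<beta> \<equiv> 1 - 1/\<alpha>"
abbreviation "rv q \<equiv> rev_channel pX q"
abbreviation "T q \<equiv> channel_update \<alpha> W (rv q)"

definition "output_dist q y = (\<Sum>x\<in>UNIV. pX x * q x y)"
definition "Z q x = (\<Sum>y\<in>UNIV. W x y * rv q x y powr \<beta>)"
definition "objective q = (\<Sum>x\<in>UNIV. pX x * (\<alpha>/(\<alpha>-1) * ln (Z q x) - ln (pX x)))"

text \<open>Rows with \<open>pX x = 0\<close> are unconstrained: \<open>T\<close> sets them to zero.\<close>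
definition "admissible q \<longleftrightarrow> (\<forall>x y. 0 \<le> q x y) \<and> (\<forall>x. 0 < pX x \<longrightarrow> sum (q x) UNIV = 1)
   \<and> (\<forall>x y. 0 < pX x \<longrightarrow> 0 < W x y \<longrightarrow> 0 < q x y)"

lemma pX_nonneg: "0 \<le> pX x" and sum_pX: "sum pX UNIV = 1"
  using dist_pX by (auto simp: is_dist_def)

lemma W_nonneg: "0 \<le> W x y" and sum_W: "sum (W x) UNIV = 1"
  using channel_W by (auto simp: is_channel_def is_dist_def)

lemma beta_gt_0: "0 < \<beta>" and beta_lt_1: "\<beta> < 1"
  using alpha_gt_1 by auto

lemma ex_W_pos: "\<exists>y. 0 < W x y"
proof (rule ccontr)
  assume "\<nexists>y. 0 < W x y"
  then have "W x y = 0" for y using W_nonneg[of x y] by (meson antisym not_less)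
  then show False using sum_W[of x] by simp
qed

lemma admissibleD:
  assumes "admissible q"
  shows "0 \<le> q x y" and "0 < pX x \<Longrightarrow> sum (q x) UNIV = 1"
    and "0 < pX x \<Longrightarrow> 0 < W x y \<Longrightarrow> 0 < q x y"
  using assms by (auto simp: admissible_def)

lemma pX_mult_sum_row: "admissible q \<Longrightarrow> pX x * sum (q x) UNIV = pX x"
  using pX_nonneg[of x] by (cases "pX x = 0") (simp_all add: admissibleD(2) less_le)

lemma rv_eq: "rv q x y = pX x * q x y / output_dist q y"
  by (simp add: rev_channel_def output_dist_def)

lemma output_dist_nonneg: "admissible q \<Longrightarrow> 0 \<le> output_dist q y"
  unfolding output_dist_def by (auto intro!: sum_nonneg simp: pX_nonneg admissibleD)

lemma le_output_dist: "admissible q \<Longrightarrow> pX x * q x y \<le> output_dist q y"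
  unfolding output_dist_def
  by (rule member_le_sum[where f="\<lambda>x. pX x * q x y"]) (auto simp: pX_nonneg admissibleD)

lemma output_dist_pos:
  assumes "admissible q" and "0 < pX x" and "0 < q x y"
  shows "0 < output_dist q y"
proof -
  have "0 < pX x * q x y" using assms(2,3) by simp
  then show ?thesis using le_output_dist[OF assms(1), of x y] by linarith
qed

lemma sum_output_dist: "admissible q \<Longrightarrow> sum (output_dist q) UNIV = 1"
proof -
  assume q: "admissible q"
  have "sum (output_dist q) UNIV = (\<Sum>x\<in>UNIV. pX x * sum (q x) UNIV)"
    unfolding output_dist_def sum_distrib_left by (rule sum.swap)
  also have "\<dots> = sum pX UNIV" by (simp only: pX_mult_sum_row[OF q])
  finally show ?thesis using sum_pX by simp
qed

lemma rv_nonneg: "admissible q \<Longrightarrow> 0 \<le> rv q x y"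
  unfolding rv_eq by (simp add: output_dist_nonneg pX_nonneg admissibleD)

lemma rv_pos: "admissible q \<Longrightarrow> 0 < pX x \<Longrightarrow> 0 < W x y \<Longrightarrow> 0 < rv q x y"
  unfolding rv_eq by (simp add: admissibleD output_dist_pos)

lemma rv_zero: "pX x = 0 \<Longrightarrow> rv q x y = 0"
  unfolding rv_eq by simp

lemma sum_rv_le_1: "admissible q \<Longrightarrow> (\<Sum>x\<in>UNIV. rv q x y) \<le> 1"
  unfolding rv_eq by (cases "output_dist q y = 0") (auto simp: output_dist_def simp flip: sum_divide_distrib)

lemma Z_pos: "admissible q \<Longrightarrow> 0 < pX x \<Longrightarrow> 0 < Z q x"
proof -
  assume q: "admissible q" and "0 < pX x"
  obtain y where "0 < W x y" using ex_W_pos by blast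
  then have "0 < W x y * rv q x y powr \<beta>" using rv_pos[OF q \<open>0 < pX x\<close> \<open>0 < W x y\<close>] by simp
  also have "\<dots> \<le> Z q x" unfolding Z_def
    by (rule member_le_sum[where f="\<lambda>y. W x y * rv q x y powr \<beta>"]) (auto simp: W_nonneg)
  finally show ?thesis .
qed

lemma T_eq: "T q x y = W x y * rv q x y powr \<beta> / Z q x"
  by (simp add: channel_update_def Z_def)

lemma T_nonneg: "0 \<le> T q x y"
  unfolding T_eq Z_def by (auto intro!: divide_nonneg_nonneg sum_nonneg simp: W_nonneg)

lemma T_posD: "0 < T q x y \<Longrightarrow> 0 < pX x \<and> 0 < W x y"
  using pX_nonneg[of x] W_nonneg[of x y] unfolding T_eq
  by (cases "pX x = 0"; cases "W x y = 0") (auto simp: rv_zero)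

lemma sum_T: "admissible q \<Longrightarrow> 0 < pX x \<Longrightarrow> sum (T q x) UNIV = 1"
  unfolding T_eq using Z_pos[of q x] by (simp add: Z_def flip: sum_divide_distrib)

lemma admissible_T:
  assumes q: "admissible q"
  shows "admissible (T q)"
  unfolding admissible_def
proof (intro conjI allI impI)
  fix x y
  show "0 \<le> T q x y" by (rule T_nonneg)
  assume "0 < pX x"
  then show "sum (T q x) UNIV = 1" by (rule sum_T[OF q])
  assume "0 < W x y"
  then show "0 < T q x y"
    unfolding T_eq using rv_pos[OF q \<open>0 < pX x\<close> \<open>0 < W x y\<close>] Z_pos[OF q \<open>0 < pX x\<close>] by simp
qed

lemma F_C_summand_eq:
  assumes q: "admissible q"
  shows "\<alpha>/(1-\<alpha>) * (if pX x * T q x y = 0 then 0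
                      else pX x * T q x y * ln (pX x * T q x y / (pX x * W x y)))
           + (if pX x * T q x y = 0 then 0 else pX x * T q x y * ln (rv q x y / pX x))
         = pX x * T q x y * (\<alpha>/(\<alpha>-1) * ln (Z q x) - ln (pX x))"
proof (cases "pX x * T q x y = 0")
  case False
  then have "0 < T q x y" using pX_nonneg[of x] T_nonneg[of q x y] by (auto simp: less_le)
  then have px: "0 < pX x" and w: "0 < W x y" using T_posD by auto
  have r: "0 < rv q x y" and z: "0 < Z q x" using rv_pos[OF q px w] Z_pos[OF q px] .
  have "pX x * T q x y / (pX x * W x y) = rv q x y powr \<beta> / Z q x"
    using px w by (simp add: T_eq)
  then have kl: "ln (pX x * T q x y / (pX x * W x y)) = \<beta> * ln (rv q x y) - ln (Z q x)"
    using r z by (simp add: ln_div ln_powr)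
  have ratio: "ln (rv q x y / pX x) = ln (rv q x y) - ln (pX x)" using r px by (simp add: ln_div)
  have "\<alpha>/(1-\<alpha>) * (t * (\<beta> * L - M)) + t * (L - p) = t * (\<alpha>/(\<alpha>-1) * M - p)" for t L M p :: real
    using alpha_gt_1 by (simp add: field_simps)
  then show ?thesis unfolding if_not_P[OF False] kl ratio .
qed simp

lemma F_C_T_eq_objective:
  assumes q: "admissible q"
  shows "F_C \<alpha> pX W (T q) (rv q) = ereal (objective q)"
proof -
  let ?t = "\<lambda>x y. pX x * T q x y"
  have supp: "0 < pX x \<and> 0 < W x y \<and> 0 < rv q x y" if "0 < ?t x y" for x y
    using that pX_nonneg[of x] T_nonneg[of q x y] T_posD[of q x y] rv_pos[OF q, of x y]
    by (auto simp: zero_less_mult_iff)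
  then have kl_finite: "\<not> (\<exists>z. (\<lambda>(x, y). ?t x y) z > 0 \<and> (\<lambda>(x, y). pX x * W x y) z = 0)"
    by fastforce
  from supp have ratio_finite: "\<not> (\<exists>x y. ?t x y > 0 \<and> rv q x y = 0)"
    by fastforce
  have pairs: "(\<Sum>z\<in>UNIV. g z) = (\<Sum>x\<in>UNIV. \<Sum>y\<in>UNIV. g (x, y))" for g :: "'x \<times> 'y \<Rightarrow> real"
    by (simp add: sum.cartesian_product flip: UNIV_Times_UNIV)
  have "F_C \<alpha> pX W (T q) (rv q)
     = ereal (\<alpha>/(1-\<alpha>) * (\<Sum>x\<in>UNIV. \<Sum>y\<in>UNIV.
                 if ?t x y = 0 then 0 else ?t x y * ln (?t x y / (pX x * W x y)))
              + (\<Sum>x\<in>UNIV. \<Sum>y\<in>UNIV. if ?t x y = 0 then 0 else ?t x y * ln (rv q x y / pX x)))"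
    unfolding F_C_def kl_div_def exp_log_ratio_def using kl_finite ratio_finite
    by (simp only: if_False pairs case_prod_conv) simp
  also have "\<dots> = ereal (\<Sum>x\<in>UNIV. \<Sum>y\<in>UNIV. ?t x y * (\<alpha>/(\<alpha>-1) * ln (Z q x) - ln (pX x)))"
    by (simp only: sum_distrib_left sum.distrib[symmetric] F_C_summand_eq[OF q])
  also have "\<dots> = ereal (objective q)"
  proof -
    have "(\<Sum>y\<in>UNIV. ?t x y * c) = pX x * c" for x c
      using pX_mult_sum_row[OF admissible_T[OF q], of x] by (simp flip: sum_distrib_left sum_distrib_right)
    then show ?thesis unfolding objective_def by simp
  qed
  finally show ?thesis .
qed

subsection \<open>The Hoelder bound and its equality case\<close>

definition "renyi_sum Q x = (\<Sum>y\<in>UNIV. W x y powr \<alpha> * Q y powr (1 - \<alpha>))"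

lemma renyi_div_eq_renyi_sum:
  assumes "\<And>y. 0 < W x y \<Longrightarrow> 0 < Q y"
  shows "renyi_div \<alpha> (W x) Q = ereal (1/(\<alpha>-1) * ln (renyi_sum Q x))"
proof -
  have "\<nexists>y. 0 < W x y \<and> Q y = 0" using assms by force
  then show ?thesis unfolding renyi_div_def renyi_sum_def by simp
qed

lemma ln_Z_le:
  assumes q: "admissible q" and Q: "is_dist Q" and px: "0 < pX x"
    and supp: "\<And>y. 0 < W x y \<Longrightarrow> 0 < Q y"
  shows "\<alpha>/(\<alpha>-1) * ln (Z q x) \<le> 1/(\<alpha>-1) * ln (renyi_sum Q x) + ln (\<Sum>y\<in>UNIV. Q y * rv q x y)"
proof -
  define B where "B = (\<Sum>y\<in>UNIV. Q y * rv q x y)"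
  have Q_nonneg: "0 \<le> Q y" for y using Q by (auto simp: is_dist_def)
  have split: "W x y * rv q x y powr \<beta>
      = (W x y powr \<alpha> * Q y powr (1 - \<alpha>)) powr (1/\<alpha>) * (Q y * rv q x y) powr \<beta>" for y
  proof (cases "W x y = 0")
    case False
    then have "0 < W x y" "0 < Q y" using W_nonneg[of x y] supp by auto
    have "(W x y powr \<alpha> * Q y powr (1 - \<alpha>)) powr (1/\<alpha>) * (Q y * rv q x y) powr \<beta>
        = W x y powr (\<alpha> * (1/\<alpha>)) * Q y powr ((1-\<alpha>) * (1/\<alpha>) + \<beta>) * rv q x y powr \<beta>"
      by (simp add: powr_mult powr_powr powr_add)
    also have "\<alpha> * (1/\<alpha>) = 1" using alpha_gt_1 by simp
    also have "(1-\<alpha>) * (1/\<alpha>) + \<beta> = 0" using alpha_gt_1 by (simp add: field_simps)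
    finally show ?thesis using \<open>0 < W x y\<close> \<open>0 < Q y\<close> by simp
  qed simp
  have "Z q x \<le> renyi_sum Q x powr (1/\<alpha>) * B powr \<beta>"
    unfolding Z_def split renyi_sum_def B_def using alpha_gt_1
    by (intro holder_inequality_sum) (auto simp: Q_nonneg rv_nonneg[OF q])
  moreover have "0 < Z q x" using Z_pos[OF q px] .
  ultimately have "0 < renyi_sum Q x" and "0 < B"
    using renyi_sum_def B_def Q_nonneg rv_nonneg[OF q] W_nonneg
    by (auto intro!: sum_nonneg simp: less_le)
  have "ln (Z q x) \<le> ln (renyi_sum Q x powr (1/\<alpha>) * B powr \<beta>)"
    using \<open>Z q x \<le> _\<close> \<open>0 < Z q x\<close> by simp
  also have "\<dots> = 1/\<alpha> * ln (renyi_sum Q x) + \<beta> * ln B"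
    using \<open>0 < renyi_sum Q x\<close> \<open>0 < B\<close> by (simp add: ln_mult ln_powr)
  finally have "\<alpha>/(\<alpha>-1) * ln (Z q x) \<le> \<alpha>/(\<alpha>-1) * (1/\<alpha> * ln (renyi_sum Q x) + \<beta> * ln B)"
    using alpha_gt_1 by (intro mult_left_mono) auto
  also have "\<dots> = 1/(\<alpha>-1) * ln (renyi_sum Q x) + ln B"
    using alpha_gt_1 by (simp add: field_simps)
  finally show ?thesis unfolding B_def .
qed

lemma objective_le_renyi_sum:
  assumes q: "admissible q" and Q: "is_dist Q"
    and supp: "\<And>x y. 0 < pX x \<Longrightarrow> 0 < W x y \<Longrightarrow> 0 < Q y"
  shows "objective q \<le> (\<Sum>x\<in>UNIV. pX x * (1/(\<alpha>-1) * ln (renyi_sum Q x)))"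
proof -
  have Q_nonneg: "0 \<le> Q y" for y using Q by (auto simp: is_dist_def)
  define B where "B x = (\<Sum>y\<in>UNIV. Q y * rv q x y)" for x
  have B_nonneg: "0 \<le> B x" for x unfolding B_def by (auto intro!: sum_nonneg simp: Q_nonneg rv_nonneg[OF q])
  have term_le: "pX x * (\<alpha>/(\<alpha>-1) * ln (Z q x) - ln (pX x))
      \<le> pX x * (1/(\<alpha>-1) * ln (renyi_sum Q x)) + (B x - pX x)" for x
  proof (cases "pX x = 0")
    case False
    then have px: "0 < pX x" using pX_nonneg[of x] by simp
    have ln_Z: "\<alpha>/(\<alpha>-1) * ln (Z q x) \<le> 1/(\<alpha>-1) * ln (renyi_sum Q x) + ln (B x)"
      unfolding B_def by (rule ln_Z_le[OF q Q px supp[OF px]])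
    obtain y where "0 < W x y" using ex_W_pos by blast
    then have "0 < Q y * rv q x y" using supp[OF px] rv_pos[OF q px] by simp
    also have "\<dots> \<le> B x" unfolding B_def
      by (rule member_le_sum[where f="\<lambda>y. Q y * rv q x y"]) (auto simp: Q_nonneg rv_nonneg[OF q])
    finally have "pX x * (ln (B x) - ln (pX x)) \<le> B x - pX x"
      using px by (intro mult_ln_ratio_le)
    moreover have "pX x * (\<alpha>/(\<alpha>-1) * ln (Z q x)) \<le> pX x * (1/(\<alpha>-1) * ln (renyi_sum Q x) + ln (B x))"
      using ln_Z px by (intro mult_left_mono) auto
    ultimately show ?thesis by (simp add: algebra_simps)
  qed (simp add: B_nonneg)
  have "(\<Sum>x\<in>UNIV. B x) = (\<Sum>y\<in>UNIV. Q y * (\<Sum>x\<in>UNIV. rv q x y))"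
    unfolding B_def sum_distrib_left by (rule sum.swap)
  also have "\<dots> \<le> (\<Sum>y\<in>UNIV. Q y)"
    using sum_rv_le_1[OF q] Q_nonneg by (intro sum_mono) (simp add: mult_left_le)
  finally have "(\<Sum>x\<in>UNIV. B x) \<le> 1" using Q by (simp add: is_dist_def)
  have "objective q \<le> (\<Sum>x\<in>UNIV. pX x * (1/(\<alpha>-1) * ln (renyi_sum Q x)) + (B x - pX x))"
    unfolding objective_def by (rule sum_mono) (rule term_le)
  also have "\<dots> = (\<Sum>x\<in>UNIV. pX x * (1/(\<alpha>-1) * ln (renyi_sum Q x))) + ((\<Sum>x\<in>UNIV. B x) - 1)"
    by (simp add: sum.distrib sum_subtractf sum_pX)
  finally show ?thesis using \<open>(\<Sum>x\<in>UNIV. B x) \<le> 1\<close> by simp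
qed

lemma objective_le_augustin_sum:
  assumes q: "admissible q" and Q: "is_dist Q"
  shows "ereal (objective q) \<le> (\<Sum>x\<in>UNIV. ereal (pX x) * renyi_div \<alpha> (W x) Q)"
proof (cases "\<exists>x y. 0 < pX x \<and> 0 < W x y \<and> Q y = 0")
  case True
  then obtain x y where "0 < pX x" "0 < W x y" "Q y = 0" by blast
  then have "renyi_div \<alpha> (W x) Q = \<infinity>" unfolding renyi_div_def by auto
  with \<open>0 < pX x\<close> have "ereal (pX x) * renyi_div \<alpha> (W x) Q = \<infinity>" by simp
  then have "(\<Sum>x\<in>UNIV. ereal (pX x) * renyi_div \<alpha> (W x) Q) = \<infinity>" by (auto simp: sum_Pinfty)
  then show ?thesis by simp
next
  case False
  then have supp: "0 < Q y" if "0 < pX x" "0 < W x y" for x y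
    using that Q by (force simp: is_dist_def less_le)
  have "ereal (pX x) * renyi_div \<alpha> (W x) Q = ereal (pX x * (1/(\<alpha>-1) * ln (renyi_sum Q x)))" for x
  proof (cases "pX x = 0")
    case False
    then have "0 < pX x" using pX_nonneg[of x] by simp
    then show ?thesis using renyi_div_eq_renyi_sum[of x Q] supp by simp
  qed (simp add: zero_ereal_def[symmetric])
  then show ?thesis using objective_le_renyi_sum[OF q Q supp] by (simp add: sum_ereal)
qed

lemma objective_le_augustin_csiszar_MI:
  "admissible q \<Longrightarrow> ereal (objective q) \<le> augustin_csiszar_MI \<alpha> pX W"
  unfolding augustin_csiszar_MI_def by (rule INF_greatest) (simp add: objective_le_augustin_sum)

lemma ln_T:
  assumes q: "admissible q" and "0 < pX x" and "0 < W x y"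
  shows "ln (T q x y) = ln (W x y) + \<beta> * (ln (pX x) + ln (q x y) - ln (output_dist q y)) - ln (Z q x)"
proof -
  have "0 < q x y" and "0 < output_dist q y" and "0 < Z q x"
    using assms by (simp_all add: admissibleD output_dist_pos Z_pos)
  moreover have "0 < rv q x y" using rv_pos[OF assms] .
  ultimately show ?thesis using assms by (simp add: T_eq rv_eq ln_div ln_mult ln_powr)
qed

lemma fixed_point_renyi_term:
  assumes qs: "admissible qs" and fp: "T qs = qs" and px: "0 < pX x"
  shows "W x y powr \<alpha> * output_dist qs y powr (1 - \<alpha>)
           = qs x y * exp (\<alpha> * ln (Z qs x) - (\<alpha> - 1) * ln (pX x))"
proof (cases "W x y = 0")
  case True
  then have "qs x y = 0" using fp T_posD[of qs x y] T_nonneg[of qs x y] by (auto simp: less_le)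
  with True show ?thesis by simp
next
  case False
  then have w: "0 < W x y" using W_nonneg[of x y] by simp
  have "0 < qs x y" using admissibleD(3)[OF qs px w] .
  then have "0 < output_dist qs y" using output_dist_pos[OF qs px] by simp
  have "ln (qs x y) = ln (W x y) + \<beta> * (ln (pX x) + ln (qs x y) - ln (output_dist qs y)) - ln (Z qs x)"
    using ln_T[OF qs px w] fp by simp
  then have "\<alpha> * ln (W x y) + (1 - \<alpha>) * ln (output_dist qs y)
               = ln (qs x y) + (\<alpha> * ln (Z qs x) - (\<alpha> - 1) * ln (pX x))"
    using alpha_gt_1 by (simp add: field_simps)
  moreover have "W x y powr \<alpha> * output_dist qs y powr (1 - \<alpha>)
                   = exp (\<alpha> * ln (W x y) + (1 - \<alpha>) * ln (output_dist qs y))"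
    using w \<open>0 < output_dist qs y\<close> by (simp add: powr_def exp_add mult.commute)
  ultimately show ?thesis using \<open>0 < qs x y\<close> by (simp add: exp_add)
qed

lemma augustin_sum_at_fixed_point:
  assumes qs: "admissible qs" and fp: "T qs = qs"
  shows "(\<Sum>x\<in>UNIV. ereal (pX x) * renyi_div \<alpha> (W x) (output_dist qs)) = ereal (objective qs)"
proof -
  have "ereal (pX x) * renyi_div \<alpha> (W x) (output_dist qs)
          = ereal (pX x * (\<alpha>/(\<alpha>-1) * ln (Z qs x) - ln (pX x)))" for x
  proof (cases "pX x = 0")
    case False
    then have px: "0 < pX x" using pX_nonneg[of x] by simp
    have supp: "0 < output_dist qs y" if "0 < W x y" for y
      using output_dist_pos[OF qs px admissibleD(3)[OF qs px that]] .
    have "renyi_sum (output_dist qs) x = exp (\<alpha> * ln (Z qs x) - (\<alpha> - 1) * ln (pX x))"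
      unfolding renyi_sum_def fixed_point_renyi_term[OF qs fp px]
      using admissibleD(2)[OF qs px] by (simp flip: sum_distrib_right)
    then have "1/(\<alpha>-1) * ln (renyi_sum (output_dist qs) x) = \<alpha>/(\<alpha>-1) * ln (Z qs x) - ln (pX x)"
      using alpha_gt_1 by (simp add: field_simps)
    then show ?thesis using renyi_div_eq_renyi_sum[OF supp] by simp
  qed (simp add: zero_ereal_def[symmetric])
  then show ?thesis unfolding objective_def by (simp add: sum_ereal)
qed

lemma augustin_csiszar_MI_eq_objective:
  assumes qs: "admissible qs" and fp: "T qs = qs"
  shows "augustin_csiszar_MI \<alpha> pX W = ereal (objective qs)"
proof (rule antisym)
  have "is_dist (output_dist qs)"
    unfolding is_dist_def using output_dist_nonneg[OF qs] sum_output_dist[OF qs] by simp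
  then show "augustin_csiszar_MI \<alpha> pX W \<le> ereal (objective qs)"
    unfolding augustin_csiszar_MI_def
    by (intro INF_lower2[of "output_dist qs"]) (simp_all add: augustin_sum_at_fixed_point[OF qs fp])
  show "ereal (objective qs) \<le> augustin_csiszar_MI \<alpha> pX W"
    by (rule objective_le_augustin_csiszar_MI[OF qs])
qed

subsection \<open>Existence of a fixed point\<close>

lemma output_dist_le_1: "admissible q \<Longrightarrow> output_dist q y \<le> 1"
  using member_le_sum[of y UNIV "output_dist q"] output_dist_nonneg sum_output_dist by simp

lemma rv_le_1: "admissible q \<Longrightarrow> rv q x y \<le> 1"
  unfolding rv_eq using le_output_dist[of q x y] output_dist_nonneg[of q y]
  by (cases "output_dist q y = 0") simp_all

lemma mult_le_rv:
  assumes q: "admissible q"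
  shows "pX x * q x y \<le> rv q x y"
proof (cases "output_dist q y = 0")
  case False
  then have "0 < output_dist q y" using output_dist_nonneg[OF q, of y] by simp
  have "pX x * q x y * output_dist q y \<le> pX x * q x y"
    using output_dist_le_1[OF q] pX_nonneg[of x] admissibleD(1)[OF q, of x y] by (simp add: mult_left_le)
  then show ?thesis unfolding rv_eq using \<open>0 < output_dist q y\<close> by (simp add: le_divide_eq)
qed (use le_output_dist[OF q, of x y] in \<open>simp add: rv_eq\<close>)

lemma Z_le_1: "admissible q \<Longrightarrow> Z q x \<le> 1"
proof -
  assume q: "admissible q"
  have "rv q x y powr \<beta> \<le> 1" for y
    using rv_le_1[OF q] rv_nonneg[OF q] beta_gt_0 by (simp add: powr_le1)
  then have "Z q x \<le> (\<Sum>y\<in>UNIV. W x y)"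
    unfolding Z_def by (intro sum_mono) (simp add: W_nonneg mult_left_le)
  then show ?thesis using sum_W by simp
qed

definition "K = Min (insert 1 ((\<lambda>(x, y). W x y * pX x powr \<beta>) ` {(x, y). 0 < pX x \<and> 0 < W x y}))"

text \<open>On the support \<open>T q \<ge> K * \<delta> powr \<beta>\<close> for every \<open>q\<close> in the box, so \<open>\<delta> \<le> K powr \<alpha>\<close> makes
  the lower bound \<open>\<delta>\<close> invariant under \<open>T\<close>; \<open>\<delta> \<le> 1 / CARD('y)\<close> keeps the box nonempty.\<close>
definition "\<delta> = min (1 / real CARD('y)) (K powr \<alpha>)"

definition "box_lower x y = (if 0 < pX x \<and> 0 < W x y then \<delta> else 0)"
definition "channel_box = {q. (\<forall>x y. box_lower x y \<le> q x y) \<and> (\<forall>x. sum (q x) UNIV = (if 0 < pX x then 1 else 0))}"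

lemma K_pos: "0 < K"
  unfolding K_def by (subst Min_gr_iff) auto

lemma K_le: "0 < pX x \<Longrightarrow> 0 < W x y \<Longrightarrow> K \<le> W x y * pX x powr \<beta>"
  unfolding K_def by (intro Min_le) auto

lemma delta_pos: "0 < \<delta>"
  unfolding \<delta>_def using K_pos by simp

lemma delta_le_K_mult: "\<delta> \<le> K * \<delta> powr \<beta>"
proof -
  have "\<delta> powr (1/\<alpha>) \<le> (K powr \<alpha>) powr (1/\<alpha>)"
    unfolding \<delta>_def using alpha_gt_1 K_pos by (intro powr_mono2) auto
  also have "\<dots> = K" using alpha_gt_1 K_pos by (simp add: powr_powr)
  finally have "\<delta> powr (1/\<alpha>) \<le> K" .
  have "\<delta> = \<delta> powr (1/\<alpha>) * \<delta> powr \<beta>" using delta_pos by (simp flip: powr_add)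
  also have "\<dots> \<le> K * \<delta> powr \<beta>" using \<open>\<delta> powr (1/\<alpha>) \<le> K\<close> by (intro mult_right_mono) auto
  finally show ?thesis .
qed

lemma channel_box_admissible:
  assumes "q \<in> channel_box"
  shows "admissible q"
proof -
  have "box_lower x y \<le> q x y" and "sum (q x) UNIV = (if 0 < pX x then 1 else 0)" for x y
    using assms by (simp_all add: channel_box_def)
  moreover have "0 \<le> box_lower x y" and "0 < pX x \<Longrightarrow> 0 < W x y \<Longrightarrow> 0 < box_lower x y" for x y
    using delta_pos by (simp_all add: box_lower_def)
  ultimately show ?thesis
    unfolding admissible_def by (meson order.trans less_le_trans)
qed

lemma T_ge_delta:
  assumes q: "q \<in> channel_box" and px: "0 < pX x" and w: "0 < W x y"
  shows "\<delta> \<le> T q x y"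
proof -
  have adm: "admissible q" using channel_box_admissible[OF q] .
  have "box_lower x y \<le> q x y" using q by (simp add: channel_box_def)
  then have "\<delta> \<le> q x y" using px w by (simp add: box_lower_def)
  then have "pX x * \<delta> \<le> pX x * q x y" using pX_nonneg[of x] by (rule mult_left_mono)
  also have "\<dots> \<le> rv q x y" by (rule mult_le_rv[OF adm])
  finally have "pX x * \<delta> \<le> rv q x y" .
  then have "(pX x * \<delta>) powr \<beta> \<le> rv q x y powr \<beta>"
    using px delta_pos beta_gt_0 by (intro powr_mono2) auto
  have "\<delta> \<le> K * \<delta> powr \<beta>" by (rule delta_le_K_mult)
  also have "\<dots> \<le> W x y * pX x powr \<beta> * \<delta> powr \<beta>"
    using K_le[OF px w] by (intro mult_right_mono) auto
  also have "\<dots> = W x y * (pX x * \<delta>) powr \<beta>" using px delta_pos by (simp add: powr_mult)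
  also have "\<dots> \<le> W x y * rv q x y powr \<beta>"
    using \<open>(pX x * \<delta>) powr \<beta> \<le> _\<close> w by (intro mult_left_mono) auto
  also have "\<dots> \<le> W x y * rv q x y powr \<beta> / Z q x"
    using Z_le_1[OF adm, of x] Z_pos[OF adm px] w by (simp add: le_divide_eq mult_left_le)
  finally show ?thesis unfolding T_eq .
qed

lemma T_channel_box:
  assumes q: "q \<in> channel_box"
  shows "T q \<in> channel_box"
proof -
  have "box_lower x y \<le> T q x y" for x y
    using T_ge_delta[OF q] T_nonneg[of q x y] by (simp add: box_lower_def)
  moreover have "sum (T q x) UNIV = (if 0 < pX x then 1 else 0)" for x
    using sum_T[OF channel_box_admissible[OF q]] pX_nonneg[of x] by (simp add: T_eq rv_zero)
  ultimately show ?thesis unfolding channel_box_def by blast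
qed

lemma channel_box_nonempty: "channel_box \<noteq> {}"
proof -
  define n where "n x = card {y. 0 < W x y}" for x
  have n_pos: "0 < n x" for x
    using ex_W_pos[of x] unfolding n_def by (subst card_gt_0_iff) auto
  have "\<delta> \<le> 1 / real (n x)" for x
  proof -
    have "n x \<le> CARD('y)" unfolding n_def by (rule card_mono) auto
    then have "1 / real CARD('y) \<le> 1 / real (n x)" using n_pos[of x] by (intro divide_left_mono) auto
    then show ?thesis unfolding \<delta>_def by linarith
  qed
  moreover have "(\<Sum>y\<in>UNIV. if 0 < W x y then 1 / real (n x) else 0) = 1" for x
    using n_pos[of x] ex_W_pos[of x] by (simp add: sum.If_cases n_def)
  ultimately have "(\<lambda>x y. if 0 < pX x \<and> 0 < W x y then 1 / real (n x) else 0) \<in> channel_box"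
    unfolding channel_box_def box_lower_def by auto
  then show ?thesis by blast
qed

lemma channel_box_le_1:
  assumes q: "q \<in> channel_box"
  shows "q x y \<le> 1"
proof -
  have "q x y \<le> sum (q x) UNIV"
    using channel_box_admissible[OF q] by (intro member_le_sum) (auto simp: admissibleD)
  also have "\<dots> \<le> 1" using q by (simp add: channel_box_def)
  finally show ?thesis .
qed

text \<open>Brouwer's theorem is stated for Euclidean spaces, so channels are encoded as vectors
  indexed by \<open>'x \<times> 'y\<close>.\<close>
definition as_channel :: "real^('x \<times> 'y) \<Rightarrow> 'x \<Rightarrow> 'y \<Rightarrow> real" where
  "as_channel v x y = v $ (x, y)"

definition "box_vec = {v. as_channel v \<in> channel_box}"

definition T_vec :: "real^('x \<times> 'y) \<Rightarrow> real^('x \<times> 'y)" where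
  "T_vec v = (\<chi> z. T (as_channel v) (fst z) (snd z))"

lemma admissible_box_vec: "v \<in> box_vec \<Longrightarrow> admissible (as_channel v)"
  unfolding box_vec_def by (simp add: channel_box_admissible)

lemma box_vec_nonempty: "box_vec \<noteq> {}"
proof -
  obtain q where q: "q \<in> channel_box" using channel_box_nonempty by blast
  have "as_channel (\<chi> z. q (fst z) (snd z)) = q" unfolding as_channel_def by simp
  then have "(\<chi> z. q (fst z) (snd z)) \<in> box_vec" using q by (simp add: box_vec_def)
  then show ?thesis by blast
qed

lemma T_vec_box_vec: "T_vec \<in> box_vec \<rightarrow> box_vec"
proof -
  have "as_channel (T_vec v) = T (as_channel v)" for v
    unfolding as_channel_def T_vec_def by simp
  then show ?thesis using T_channel_box by (auto simp: box_vec_def)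
qed

lemma closed_box_vec: "closed box_vec"
  unfolding box_vec_def channel_box_def as_channel_def mem_Collect_eq
  by (intro closed_Collect_conj closed_Collect_all closed_Collect_le closed_Collect_eq continuous_intros)

lemma bounded_box_vec: "bounded box_vec"
proof -
  have "norm v \<le> real CARD('x \<times> 'y)" if v: "v \<in> box_vec" for v
  proof -
    have "\<bar>v $ (x, y)\<bar> \<le> 1" for x y
      using admissibleD(1)[OF admissible_box_vec[OF v]] channel_box_le_1[of "as_channel v" x y] v
      by (simp add: as_channel_def box_vec_def)
    then have "(\<Sum>z\<in>UNIV. \<bar>v $ z\<bar>) \<le> (\<Sum>z\<in>(UNIV::('x \<times> 'y) set). 1)"
      by (intro sum_mono) (metis surj_pair)
    then show ?thesis using norm_le_l1_cart[of v] by simp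
  qed
  then show ?thesis unfolding bounded_iff by blast
qed

lemma convex_box_vec: "convex box_vec"
  unfolding convex_def
proof (intro ballI allI impI)
  fix a b :: "real^('x \<times> 'y)" and u v :: real
  assume "a \<in> box_vec" "b \<in> box_vec" and uv: "0 \<le> u" "0 \<le> v" "u + v = 1"
  then have a: "as_channel a \<in> channel_box" and b: "as_channel b \<in> channel_box"
    by (auto simp: box_vec_def)
  have "box_lower x y \<le> u * as_channel a x y + v * as_channel b x y" for x y
  proof -
    have "u * box_lower x y + v * box_lower x y \<le> u * as_channel a x y + v * as_channel b x y"
      using a b uv by (intro add_mono mult_left_mono) (auto simp: channel_box_def)
    moreover have "u * box_lower x y + v * box_lower x y = box_lower x y"
      using uv by (metis distrib_right mult_1)
    ultimately show ?thesis by simp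
  qed
  moreover have "(\<Sum>y\<in>UNIV. u * as_channel a x y + v * as_channel b x y)
                   = (if 0 < pX x then 1 else 0)" for x
  proof -
    have "(\<Sum>y\<in>UNIV. u * as_channel a x y + v * as_channel b x y)
            = u * sum (as_channel a x) UNIV + v * sum (as_channel b x) UNIV"
      by (simp add: sum.distrib sum_distrib_left)
    also have "\<dots> = (u + v) * (if 0 < pX x then 1 else 0)"
      using a b by (simp add: channel_box_def distrib_right)
    finally show ?thesis using uv by simp
  qed
  moreover have "as_channel (u *\<^sub>R a + v *\<^sub>R b) = (\<lambda>x y. u * as_channel a x y + v * as_channel b x y)"
    unfolding as_channel_def by simp
  ultimately show "u *\<^sub>R a + v *\<^sub>R b \<in> box_vec"
    unfolding box_vec_def channel_box_def by simp
qed

lemma continuous_on_T_term: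
  assumes px: "0 < pX x"
  shows "continuous_on box_vec (\<lambda>v. W x y * rv (as_channel v) x y powr \<beta>)"
proof (cases "W x y = 0")
  case False
  then have w: "0 < W x y" using W_nonneg[of x y] by simp
  have pos: "0 < (\<Sum>x'\<in>UNIV. pX x' * v $ (x', y)) \<and> 0 < v $ (x, y)" if "v \<in> box_vec" for v
  proof -
    have adm: "admissible (as_channel v)" using admissible_box_vec[OF that] .
    show ?thesis
      using output_dist_pos[OF adm px] admissibleD(3)[OF adm px w]
      unfolding output_dist_def as_channel_def by simp
  qed
  then show ?thesis
    unfolding rv_eq output_dist_def as_channel_def
    using px by (intro continuous_intros) (auto dest!: pos)
qed simp

lemma continuous_on_T_vec: "continuous_on box_vec T_vec"
  unfolding T_vec_def
proof (intro continuous_on_vec_lambda)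
  fix z :: "'x \<times> 'y"
  obtain x y where z: "z = (x, y)" by (cases z)
  show "continuous_on box_vec (\<lambda>v. T (as_channel v) (fst z) (snd z))"
  proof (cases "pX x = 0")
    case False
    then have px: "0 < pX x" using pX_nonneg[of x] by simp
    have "Z (as_channel v) x \<noteq> 0" if "v \<in> box_vec" for v
      using Z_pos[OF admissible_box_vec[OF that] px] by simp
    then have "continuous_on box_vec (\<lambda>v. W x y * rv (as_channel v) x y powr \<beta> / Z (as_channel v) x)"
      unfolding Z_def by (intro continuous_on_divide continuous_on_sum continuous_on_T_term px) auto
    then show ?thesis by (simp add: z T_eq)
  qed (simp add: z T_eq rv_zero)
qed

lemma ex_fixed_point: "\<exists>qs. admissible qs \<and> T qs = qs"
proof -
  have "compact box_vec" using bounded_box_vec closed_box_vec by (simp add: compact_eq_bounded_closed)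
  then obtain v where v: "v \<in> box_vec" and "T_vec v = v"
    using brouwer[OF _ convex_box_vec box_vec_nonempty continuous_on_T_vec T_vec_box_vec] by blast
  then have "T (as_channel v) = as_channel v"
    unfolding as_channel_def T_vec_def by (metis (no_types) vec_lambda_beta prod.sel)
  then show ?thesis using admissible_box_vec[OF v] by blast
qed

subsection \<open>Convergence\<close>

definition "potential qs q = (\<Sum>x\<in>UNIV. \<Sum>y\<in>UNIV. pX x * qs x y * ln (q x y))"
definition "cond_kl qs q = (\<Sum>x\<in>UNIV. pX x * (\<Sum>y\<in>UNIV. qs x y * (ln (qs x y) - ln (q x y))))"
definition "output_kl qs q =
  (\<Sum>y\<in>UNIV. output_dist qs y * (ln (output_dist qs y) - ln (output_dist q y)))"

lemma fixed_point_support: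
  assumes q: "admissible q" and fp: "T qs = qs" and "0 < qs x y"
  shows "0 < pX x" and "0 < W x y" and "0 < q x y"
  using T_posD[of qs x y] fp assms(3) admissibleD(3)[OF q] by auto

lemma cond_kl_nonneg:
  assumes q: "admissible q" and qs: "admissible qs" and fp: "T qs = qs"
  shows "0 \<le> cond_kl qs q"
  unfolding cond_kl_def
proof (intro sum_nonneg)
  fix x
  show "0 \<le> pX x * (\<Sum>y\<in>UNIV. qs x y * (ln (qs x y) - ln (q x y)))"
  proof (cases "pX x = 0")
    case False
    then have "0 < pX x" using pX_nonneg[of x] by simp
    then have "0 \<le> (\<Sum>y\<in>UNIV. qs x y * (ln (qs x y) - ln (q x y)))"
      using admissibleD(2)[OF q] admissibleD(2)[OF qs] fixed_point_support(3)[OF q fp]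
      by (intro gibbs_inequality) (simp_all add: admissibleD(1)[OF q] admissibleD(1)[OF qs])
    then show ?thesis using pX_nonneg[of x] by simp
  qed simp
qed

lemma output_kl_nonneg:
  assumes q: "admissible q" and qs: "admissible qs" and fp: "T qs = qs"
  shows "0 \<le> output_kl qs q"
  unfolding output_kl_def
proof (rule gibbs_inequality)
  fix y
  assume "0 < output_dist qs y"
  then have "(\<Sum>x\<in>UNIV. pX x * qs x y) \<noteq> 0" unfolding output_dist_def by simp
  then obtain x where "pX x * qs x y \<noteq> 0" using sum.not_neutral_contains_not_neutral by blast
  then have "0 < qs x y" using admissibleD(1)[OF qs, of x y] by (simp add: less_le)
  then show "0 < output_dist q y"
    by (intro output_dist_pos[OF q] fixed_point_support[OF q fp])
next
  show "sum (output_dist q) UNIV \<le> sum (output_dist qs) UNIV"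
    using sum_output_dist[OF q] sum_output_dist[OF qs] by simp
qed (simp_all add: output_dist_nonneg[OF q] output_dist_nonneg[OF qs])

lemma potential_le_fixed_point:
  assumes q: "admissible q" and qs: "admissible qs" and fp: "T qs = qs"
  shows "potential qs q \<le> potential qs qs"
proof -
  have "potential qs qs - potential qs q = cond_kl qs q"
    unfolding potential_def cond_kl_def
    by (simp add: sum_subtractf sum_distrib_left algebra_simps flip: sum.distrib)
  then show ?thesis using cond_kl_nonneg[OF assms] by simp
qed

lemma weighted_ln_T_diff:
  assumes q: "admissible q" and qs: "admissible qs" and fp: "T qs = qs"
  shows "pX x * qs x y * (ln (T q x y) - ln (q x y))
           = (1 - \<beta>) * (pX x * (qs x y * (ln (qs x y) - ln (q x y))))
             + \<beta> * (pX x * qs x y * (ln (output_dist qs y) - ln (output_dist q y)))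
             + pX x * qs x y * (ln (Z qs x) - ln (Z q x))"
proof (cases "qs x y = 0")
  case False
  then have "0 < qs x y" using admissibleD(1)[OF qs, of x y] by simp
  then have px: "0 < pX x" and w: "0 < W x y" using fixed_point_support[OF q fp] by auto
  have "ln (qs x y) = ln (W x y) + \<beta> * (ln (pX x) + ln (qs x y) - ln (output_dist qs y)) - ln (Z qs x)"
    using ln_T[OF qs px w] fp by simp
  then have diff: "ln (T q x y) - ln (q x y) = (1 - \<beta>) * (ln (qs x y) - ln (q x y))
           + \<beta> * (ln (output_dist qs y) - ln (output_dist q y)) + (ln (Z qs x) - ln (Z q x))"
    using ln_T[OF q px w] by (simp add: algebra_simps)
  show ?thesis unfolding diff by (simp add: algebra_simps)
qed simp

lemma objective_diff_eq:
  "\<beta> * (objective q' - objective q) = (\<Sum>x\<in>UNIV. pX x * (ln (Z q' x) - ln (Z q x)))"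
proof -
  have "objective q' - objective q = \<alpha>/(\<alpha>-1) * (\<Sum>x\<in>UNIV. pX x * (ln (Z q' x) - ln (Z q x)))"
    unfolding objective_def by (simp add: sum_distrib_left algebra_simps flip: sum_subtractf)
  moreover have "\<beta> * (\<alpha>/(\<alpha>-1)) = 1" using alpha_gt_1 by (simp add: field_simps)
  ultimately show ?thesis by (simp only: mult.assoc[symmetric] mult_1_left)
qed

lemma potential_step_eq:
  assumes q: "admissible q" and qs: "admissible qs" and fp: "T qs = qs"
  shows "potential qs (T q) - potential qs q
           = (1 - \<beta>) * cond_kl qs q + \<beta> * output_kl qs q + \<beta> * (objective qs - objective q)"
proof -
  let ?w = "\<lambda>x y. pX x * qs x y"
  have "potential qs (T q) - potential qs q
          = (\<Sum>x\<in>UNIV. \<Sum>y\<in>UNIV. ?w x y * (ln (T q x y) - ln (q x y)))"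
    unfolding potential_def by (simp add: sum_subtractf algebra_simps)
  also have "\<dots> = (\<Sum>x\<in>UNIV. \<Sum>y\<in>UNIV. (1 - \<beta>) * (pX x * (qs x y * (ln (qs x y) - ln (q x y))))
        + \<beta> * (?w x y * (ln (output_dist qs y) - ln (output_dist q y)))
        + ?w x y * (ln (Z qs x) - ln (Z q x)))"
    by (intro sum.cong refl weighted_ln_T_diff[OF assms])
  also have "\<dots> = (1 - \<beta>) * cond_kl qs q + \<beta> * output_kl qs q
                  + (\<Sum>x\<in>UNIV. pX x * (ln (Z qs x) - ln (Z q x)))"
  proof -
    have "(\<Sum>x\<in>UNIV. \<Sum>y\<in>UNIV. (1 - \<beta>) * (pX x * (qs x y * (ln (qs x y) - ln (q x y)))))
            = (1 - \<beta>) * cond_kl qs q"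
      unfolding cond_kl_def by (simp only: sum_distrib_left)
    moreover have "(\<Sum>x\<in>UNIV. \<Sum>y\<in>UNIV. \<beta> * (?w x y * (ln (output_dist qs y) - ln (output_dist q y))))
            = \<beta> * output_kl qs q"
    proof -
      have "(\<Sum>x\<in>UNIV. \<Sum>y\<in>UNIV. ?w x y * (ln (output_dist qs y) - ln (output_dist q y)))
              = output_kl qs q"
        unfolding output_kl_def output_dist_def sum_distrib_right by (rule sum.swap)
      then show ?thesis by (simp flip: sum_distrib_left)
    qed
    moreover have "(\<Sum>y\<in>UNIV. ?w x y * c) = pX x * c" for x c
      using pX_mult_sum_row[OF qs, of x] by (simp flip: sum_distrib_left sum_distrib_right)
    ultimately show ?thesis by (simp only: sum.distrib)
  qed
  also have "(\<Sum>x\<in>UNIV. pX x * (ln (Z qs x) - ln (Z q x))) = \<beta> * (objective qs - objective q)"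
    by (rule objective_diff_eq[symmetric])
  finally show ?thesis .
qed

lemma potential_increment:
  assumes q: "admissible q" and qs: "admissible qs" and fp: "T qs = qs"
  shows "\<beta> * (objective qs - objective q) \<le> potential qs (T q) - potential qs q"
proof -
  have "0 \<le> (1 - \<beta>) * cond_kl qs q" and "0 \<le> \<beta> * output_kl qs q"
    using cond_kl_nonneg[OF assms] output_kl_nonneg[OF assms] beta_gt_0 beta_lt_1
    by (simp_all only: mult_nonneg_nonneg diff_ge_0_iff_ge less_imp_le)
  then show ?thesis using potential_step_eq[OF assms] by linarith
qed

lemma admissible_iterates:
  assumes "admissible (q 0)" and "\<And>k. q (Suc k) = T (q k)"
  shows "admissible (q k)"
  by (induction k) (simp_all add: assms admissible_T)

lemma objective_tendsto_fixed_point: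
  assumes q0: "admissible (q 0)" and step: "\<And>k. q (Suc k) = T (q k)"
    and qs: "admissible qs" and fp: "T qs = qs"
  shows "(\<lambda>k. objective (q k)) \<longlonglongrightarrow> objective qs"
proof -
  have q: "admissible (q k)" for k using admissible_iterates[OF q0 step] .
  have "objective (q k) \<le> objective qs" for k
    using objective_le_augustin_csiszar_MI[OF q] augustin_csiszar_MI_eq_objective[OF qs fp] by simp
  then have "(\<lambda>k. \<beta> * (objective qs - objective (q k))) \<longlonglongrightarrow> 0"
    using potential_increment[OF q qs fp] potential_le_fixed_point[OF q qs fp] beta_gt_0
    by (intro bounded_increments_tendsto_zero[where \<Phi>="\<lambda>k. potential qs (q k)"]) (simp_all add: step)
  then have "(\<lambda>k. \<beta> * (objective qs - objective (q k))) \<longlonglongrightarrow> \<beta> * 0" by simp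
  moreover have "\<beta> \<noteq> 0" using beta_gt_0 by linarith
  ultimately have "(\<lambda>k. objective qs - objective (q k)) \<longlonglongrightarrow> 0"
    using tendsto_mult_left_iff by blast
  then have "(\<lambda>k. objective qs - (objective qs - objective (q k))) \<longlonglongrightarrow> objective qs - 0"
    by (intro tendsto_diff tendsto_const)
  then show ?thesis by simp
qed

end

theorem corollary3:
  fixes \<alpha> :: real
    and pX :: "'x::finite \<Rightarrow> real"
    and W :: "'x \<Rightarrow> 'y::finite \<Rightarrow> real"
    and q :: "nat \<Rightarrow> 'x \<Rightarrow> 'y \<Rightarrow> real"
  assumes "\<alpha> > 1"
    and "is_dist pX"
    and "is_channel W"
    and "is_channel (q 0)"
    and "\<And>x y. q 0 x y > 0"
    and "\<And>k. q (Suc k) = channel_update \<alpha> W (rev_channel pX (q k))"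
  shows "(\<lambda>k. F_C \<alpha> pX W (q (Suc k)) (rev_channel pX (q k)))
           \<longlonglongrightarrow> augustin_csiszar_MI \<alpha> pX W"
proof -
  interpret augustin_channel \<alpha> pX W using assms(1-3) by unfold_locales
  have q0: "admissible (q 0)"
    using assms(4,5) by (auto simp: admissible_def is_channel_def is_dist_def less_imp_le)
  have q: "admissible (q k)" for k using admissible_iterates[OF q0 assms(6)] .
  obtain qs where qs: "admissible qs" and fp: "T qs = qs" using ex_fixed_point by blast
  have "(\<lambda>k. ereal (objective (q k))) \<longlonglongrightarrow> ereal (objective qs)"
    using objective_tendsto_fixed_point[OF q0 assms(6) qs fp] by (rule tendsto_ereal)
  then show ?thesis
    unfolding assms(6) F_C_T_eq_objective[OF q] augustin_csiszar_MI_eq_objective[OF qs fp] .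
qed

end
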